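(* Let $\mu>0$, let $X$ have the skew-symmetric-Laplace-uniform density with parameter $\mu$ (defined in the context), with cdf $G$, and let $M$ be a median, i.e. $G(M)=\tfrac12$. Put $G(0)=\tfrac12+\frac{e^{-\mu}-1}{2\mu}$ and $G(\mu)=1-e^{-\mu}$. Then: (i) if $G(0)>\tfrac12$, $M$ is a solution of $e^{M}(M-1+\mu)+e^{-\mu}-\mu=0$; (ii) if $G(0)\le\tfrac12<G(\mu)$, $M$ is a solution of $e^{-M}(-M-1-\mu)+e^{-\mu}+\mu=0$; (iii) if $G(\mu)\le\tfrac12$, then $M=\ln 2$.
   Context: For $\mu\in\mathbb{R}\setminus\{0\}$, the skew-symmetric-Laplace-uniform distribution $SSLUD(\mu)$ is the distribution on $\mathbb{R}$ with density $$g(x)=\begin{cases} 0 & \text{if } x/\mu<-1,\\ e^{-|x|}\left(\dfrac{x}{2\mu}+\dfrac12\right) & \text{if } -1\le x/\mu<1,\\ e^{-|x|} & \text{if } x/\mu\ge 1.\end{cases}$$ *)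

theory Defs
  imports "HOL-Analysis.Analysis"
begin

definition SSLUD_density :: "real \<Rightarrow> real \<Rightarrow> real" where
  "SSLUD_density mu x =
     (if x / mu < -1 then 0
      else if x / mu < 1 then exp (- \<bar>x\<bar>) * (x / (2 * mu) + 1 / 2)
      else exp (- \<bar>x\<bar>))"

definition SSLUD_cdf :: "real \<Rightarrow> real \<Rightarrow> real" where
  "SSLUD_cdf mu x = (LINT t:{..x}|lborel. SSLUD_density mu t)"

end

theory Submission
  imports Defs
begin

text \<open>Integrating the density piecewise over \<open>[-\<mu>, 0]\<close>, \<open>[0, \<mu>]\<close> and \<open>[\<mu>, x]\<close>
  gives \<open>G\<close> in closed form. Since \<open>G(0) < 1/2\<close> for every \<open>\<mu> > 0\<close> (so case (i) is
  vacuous), a median is positive, and because \<open>G\<close> is strictly increasing on \<open>[0, \<infinity>)\<close>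
  it lies in \<open>(0, \<mu>)\<close> exactly when \<open>G(\<mu>) > 1/2\<close>; solving \<open>G(M) = 1/2\<close> with the
  closed form on the relevant piece yields the two equations.\<close>

lemma integral_eq_antiderivative:
  fixes F f :: "real \<Rightarrow> real"
  assumes "a \<le> b" and "\<And>x. x \<in> {a..b} \<Longrightarrow> (F has_real_derivative f x) (at x)"
  shows "integral {a..b} f = F b - F a"
  using assms
  by (intro integral_unique fundamental_theorem_of_calculus)
     (auto simp: has_real_derivative_iff_has_vector_derivative[symmetric] intro: has_field_derivative_at_within)

lemma SSLUD_density_below:
  assumes "mu > 0" and "t < -mu"
  shows "SSLUD_density mu t = 0"
  using assms by (simp add: SSLUD_density_def divide_less_eq)

lemma SSLUD_density_center:
  assumes "mu > 0" and "-mu \<le> t" and "t \<le> mu"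
  shows "SSLUD_density mu t = exp (- \<bar>t\<bar>) * ((t + mu) / (2 * mu))"
  using assms by (auto simp: SSLUD_density_def divide_less_eq field_simps)

lemma SSLUD_density_above:
  assumes "mu > 0" and "mu \<le> t"
  shows "SSLUD_density mu t = exp (- t)"
  using assms by (simp add: SSLUD_density_def divide_less_eq)

lemma SSLUD_density_eq_clamp:
  assumes "mu > 0"
  shows "SSLUD_density mu t = exp (- \<bar>t\<bar>) * min 1 (max 0 ((t + mu) / (2 * mu)))"
proof -
  have "(t + mu) / (2 * mu) < 0 \<longleftrightarrow> t < -mu" and "1 \<le> (t + mu) / (2 * mu) \<longleftrightarrow> mu \<le> t"
    using assms by (auto simp: divide_less_0_iff le_divide_eq)
  then show ?thesis
    using assms SSLUD_density_below SSLUD_density_center SSLUD_density_above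
    by (cases "t < -mu"; cases "mu \<le> t") (auto simp: min_def max_def)
qed

lemma continuous_on_SSLUD_density:
  assumes "mu > 0"
  shows "continuous_on S (SSLUD_density mu)"
  unfolding SSLUD_density_eq_clamp[OF assms, abs_def]
  by (intro continuous_intros) (use assms in auto)

lemma SSLUD_density_nonneg:
  assumes "mu > 0"
  shows "0 \<le> SSLUD_density mu t"
  using assms by (simp add: SSLUD_density_eq_clamp)

lemma SSLUD_density_ge_half_exp:
  assumes "mu > 0" and "0 \<le> t"
  shows "exp (- t) / 2 \<le> SSLUD_density mu t"
proof (cases "t \<le> mu")
  case True
  have "1 / 2 \<le> (t + mu) / (2 * mu)"
    using assms by (simp add: field_simps)
  from mult_left_mono[OF this, of "exp (- t)"] show ?thesis
    using True assms by (simp add: SSLUD_density_center)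
qed (use assms in \<open>simp add: SSLUD_density_above\<close>)

lemma SSLUD_cdf_eq_integral:
  assumes "mu > 0"
  shows "SSLUD_cdf mu x = integral {-mu..x} (SSLUD_density mu)"
proof -
  have "SSLUD_cdf mu x = (LINT t:{-mu..x}|lborel. SSLUD_density mu t)"
    unfolding SSLUD_cdf_def set_lebesgue_integral_def
    by (intro Bochner_Integration.integral_cong)
       (auto simp: indicator_def SSLUD_density_below[OF assms])
  also have "\<dots> = integral {-mu..x} (SSLUD_density mu)"
    by (intro set_borel_integral_eq_integral(2) borel_integrable_atLeastAtMost'
        continuous_on_SSLUD_density assms)
  finally show ?thesis .
qed

lemma SSLUD_cdf_diff:
  assumes "mu > 0" and "-mu \<le> x" and "x \<le> y"
  shows "SSLUD_cdf mu y - SSLUD_cdf mu x = integral {x..y} (SSLUD_density mu)"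
  using Henstock_Kurzweil_Integration.integral_combine[OF assms(2,3) integrable_continuous_interval[OF continuous_on_SSLUD_density[OF assms(1)]]]
    assms
  by (simp add: SSLUD_cdf_eq_integral)

lemma mono_SSLUD_cdf:
  assumes "mu > 0"
  shows "mono (SSLUD_cdf mu)"
proof
  fix x y :: real
  assume "x \<le> y"
  have nonneg: "0 \<le> integral {a..b} (SSLUD_density mu)" for a b
    by (intro integral_nonneg integrable_continuous_interval continuous_on_SSLUD_density
        SSLUD_density_nonneg assms)
  show "SSLUD_cdf mu x \<le> SSLUD_cdf mu y"
  proof (cases "x < -mu")
    case True
    then show ?thesis
      using nonneg by (simp add: SSLUD_cdf_eq_integral[OF assms])
  next
    case False
    then have "SSLUD_cdf mu y - SSLUD_cdf mu x = integral {x..y} (SSLUD_density mu)"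
      using \<open>x \<le> y\<close> by (intro SSLUD_cdf_diff assms) auto
    then show ?thesis
      using nonneg[of x y] by linarith
  qed
qed

lemma SSLUD_cdf_strict_mono_nonneg:
  assumes "mu > 0" and "0 \<le> x" and "x < y"
  shows "SSLUD_cdf mu x < SSLUD_cdf mu y"
proof -
  have "0 < (y - x) * (exp (- y) / 2)"
    using assms by simp
  also have "\<dots> = integral {x..y} (\<lambda>_. exp (- y) / 2)"
    using assms by simp
  also have "\<dots> \<le> integral {x..y} (SSLUD_density mu)"
  proof (intro integral_le integrable_continuous_interval continuous_on_SSLUD_density assms
      continuous_intros)
    fix t assume "t \<in> {x..y}"
    then have "exp (- y) / 2 \<le> exp (- t) / 2" by simp
    also have "\<dots> \<le> SSLUD_density mu t"
      using \<open>t \<in> {x..y}\<close> assms by (intro SSLUD_density_ge_half_exp) auto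
    finally show "exp (- y) / 2 \<le> SSLUD_density mu t" .
  qed
  also have "\<dots> = SSLUD_cdf mu y - SSLUD_cdf mu x"
    using assms by (simp add: SSLUD_cdf_diff)
  finally show ?thesis by simp
qed

lemma SSLUD_cdf_zero:
  assumes "mu > 0"
  shows "SSLUD_cdf mu 0 = 1 / 2 + (exp (- mu) - 1) / (2 * mu)"
proof -
  have "SSLUD_cdf mu 0 = integral {-mu..0} (SSLUD_density mu)"
    using assms by (simp add: SSLUD_cdf_eq_integral)
  also have "\<dots> = exp 0 * (0 + mu - 1) / (2 * mu) - exp (- mu) * (- mu + mu - 1) / (2 * mu)"
  proof (rule integral_eq_antiderivative[where F = "\<lambda>t. exp t * (t + mu - 1) / (2 * mu)"])
    fix t :: real assume "t \<in> {-mu..0}"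
    then have density: "SSLUD_density mu t = exp t * ((t + mu) / (2 * mu))"
      using assms by (simp add: SSLUD_density_center)
    show "((\<lambda>t. exp t * (t + mu - 1) / (2 * mu)) has_real_derivative SSLUD_density mu t) (at t)"
      unfolding density using assms by (auto intro!: derivative_eq_intros simp: field_simps)
  qed (use assms in simp)
  also have "\<dots> = 1 / 2 + (exp (- mu) - 1) / (2 * mu)"
    using assms by (simp add: field_simps)
  finally show ?thesis .
qed

lemma SSLUD_cdf_center:
  assumes "mu > 0" and "0 \<le> x" and "x \<le> mu"
  shows "SSLUD_cdf mu x = 1 + (exp (- mu) - exp (- x) * (x + mu + 1)) / (2 * mu)"
proof -
  have "SSLUD_cdf mu x - SSLUD_cdf mu 0 = integral {0..x} (SSLUD_density mu)"
    using assms by (intro SSLUD_cdf_diff) auto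
  also have "\<dots> = - exp (- x) * (x + mu + 1) / (2 * mu) - - exp (- 0) * (0 + mu + 1) / (2 * mu)"
  proof (rule integral_eq_antiderivative[where F = "\<lambda>t. - exp (- t) * (t + mu + 1) / (2 * mu)"])
    fix t :: real assume "t \<in> {0..x}"
    then have density: "SSLUD_density mu t = exp (- t) * ((t + mu) / (2 * mu))"
      using assms by (simp add: SSLUD_density_center)
    show "((\<lambda>t. - exp (- t) * (t + mu + 1) / (2 * mu)) has_real_derivative SSLUD_density mu t) (at t)"
      unfolding density using assms by (auto intro!: derivative_eq_intros simp: field_simps)
  qed (use assms in simp)
  also have "\<dots> = (mu + 1 - exp (- x) * (x + mu + 1)) / (2 * mu)"
    using assms by (simp add: field_simps)
  finally have "SSLUD_cdf mu x = SSLUD_cdf mu 0 + (mu + 1 - exp (- x) * (x + mu + 1)) / (2 * mu)"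
    by simp
  also have "\<dots> = 1 + (exp (- mu) - exp (- x) * (x + mu + 1)) / (2 * mu)"
    using assms by (simp add: SSLUD_cdf_zero field_simps)
  finally show ?thesis .
qed

lemma SSLUD_cdf_above:
  assumes "mu > 0" and "mu \<le> x"
  shows "SSLUD_cdf mu x = 1 - exp (- x)"
proof -
  have "SSLUD_cdf mu x - SSLUD_cdf mu mu = integral {mu..x} (SSLUD_density mu)"
    using assms by (intro SSLUD_cdf_diff) auto
  also have "\<dots> = - exp (- x) - - exp (- mu)"
  proof (rule integral_eq_antiderivative[where F = "\<lambda>t. - exp (- t)"])
    fix t :: real assume "t \<in> {mu..x}"
    then show "((\<lambda>t. - exp (- t)) has_real_derivative SSLUD_density mu t) (at t)"
      using assms by (auto intro!: derivative_eq_intros simp: SSLUD_density_above)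
  qed (use assms in simp)
  finally show ?thesis
    using assms by (simp add: SSLUD_cdf_center field_simps)
qed

theorem mainTheorem5:
  fixes mu M :: real
  assumes "mu > 0"
    and "SSLUD_cdf mu M = 1 / 2"
  shows "SSLUD_cdf mu 0 = 1 / 2 + (exp (- mu) - 1) / (2 * mu)
       \<and> SSLUD_cdf mu mu = 1 - exp (- mu)
       \<and> (SSLUD_cdf mu 0 > 1 / 2 \<longrightarrow> exp M * (M - 1 + mu) + exp (- mu) - mu = 0)
       \<and> (SSLUD_cdf mu 0 \<le> 1 / 2 \<and> 1 / 2 < SSLUD_cdf mu mu \<longrightarrow>
            exp (- M) * (- M - 1 - mu) + exp (- mu) + mu = 0)
       \<and> (SSLUD_cdf mu mu \<le> 1 / 2 \<longrightarrow> M = ln 2)"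
proof -
  note G0 = SSLUD_cdf_zero[OF assms(1)]
  note Gmu = SSLUD_cdf_above[OF assms(1) order.refl]
  have G0_less: "SSLUD_cdf mu 0 < 1 / 2"
    using assms(1) by (simp add: G0 divide_less_0_iff)
  have "0 < M"
    using monoD[OF mono_SSLUD_cdf[OF assms(1)], of M 0] G0_less assms(2) by fastforce
  consider "M < mu" | "mu \<le> M" by linarith
  then show ?thesis
  proof cases
    case 1
    have "1 / 2 < SSLUD_cdf mu mu"
      using SSLUD_cdf_strict_mono_nonneg[OF assms(1) _ 1] \<open>0 < M\<close> assms(2) by simp
    moreover have "exp (- M) * (- M - 1 - mu) + exp (- mu) + mu = 0"
      using SSLUD_cdf_center[OF assms(1), of M] 1 \<open>0 < M\<close> assms
      by (simp add: field_simps)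
    ultimately show ?thesis
      using G0 Gmu G0_less by linarith
  next
    case 2
    have "exp (- M) = 1 / 2"
      using SSLUD_cdf_above[OF assms(1) 2] assms(2) by simp
    then have "M = ln 2"
      by (metis exp_minus inverse_eq_divide inverse_inverse_eq ln_exp)
    moreover have "SSLUD_cdf mu mu \<le> 1 / 2"
      using monoD[OF mono_SSLUD_cdf[OF assms(1)] 2] assms(2) by simp
    ultimately show ?thesis
      using G0 Gmu G0_less by linarith
  qed
qed

end
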